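(* Let $M\in\mathcal S^{n\times n}$ be distinguished with block form $M=\begin{bmatrix}A&C\\C^t&B\end{bmatrix}$, where $A$ has degree $k>0$ and $B$ degree $l=n-k$. Assume (i) $A$ is self-conjugate; (ii) the first row of $M$ is $[1,2,\dots,2]$; (iii) $J_M(\{1,i,j\})\ne\emptyset$ for all $1\le i\le k<j\le n$. Then every entry of $C$ equals $2$.
   Context: $\mathcal S=\{0,1,2,3\}$ is the Klein four-group ($\mathbb Z_2$-vector space) with $x+x=0$, $1+2=3$, $1+3=2$, $2+3=1$; conjugation is the involution $\bar0=0,\bar1=1,\bar2=3,\bar3=2$. A square matrix is distinguished if it has $1$ on the diagonal and $2$ or $3$ off the diagonal, and self-conjugate if $A^t=\overline A$. $J_M(U)=\{j:\sum_{i\in U}M_{ij}=1\}$. *)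

theory Defs
  imports Main
begin

text \<open>The Klein four-group S = {0,1,2,3} with 1+2=3, 1+3=2, 2+3=1, x+x=0.\<close>
datatype S = S0 | S1 | S2 | S3

fun sadd :: "S \<Rightarrow> S \<Rightarrow> S" where
  "sadd S0 y = y"
| "sadd x S0 = x"
| "sadd S1 S1 = S0" | "sadd S2 S2 = S0" | "sadd S3 S3 = S0"
| "sadd S1 S2 = S3" | "sadd S2 S1 = S3"
| "sadd S1 S3 = S2" | "sadd S3 S1 = S2"
| "sadd S2 S3 = S1" | "sadd S3 S2 = S1"

instantiation S :: comm_monoid_add
begin
definition zero_S_def: "0 = S0"
definition plus_S_def: "x + y = sadd x y"
instance
proof
  fix a b c :: S
  show "a + b + c = a + (b + c)" unfolding plus_S_def
    by (cases a; cases b; cases c; simp)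
  show "a + b = b + a" unfolding plus_S_def
    by (cases a; cases b; simp)
  show "0 + a = a" unfolding plus_S_def zero_S_def by simp
qed
end

fun sconj :: "S \<Rightarrow> S" where
  "sconj S0 = S0" | "sconj S1 = S1" | "sconj S2 = S3" | "sconj S3 = S2"

text \<open>Matrices over S of size n are functions nat \<Rightarrow> nat \<Rightarrow> S, indices 1..n.\<close>
definition distinguished :: "nat \<Rightarrow> (nat \<Rightarrow> nat \<Rightarrow> S) \<Rightarrow> bool" where
  "distinguished n M \<longleftrightarrow>
     (\<forall>i\<in>{1..n}. M i i = S1) \<and>
     (\<forall>i\<in>{1..n}. \<forall>j\<in>{1..n}. i \<noteq> j \<longrightarrow> M i j = S2 \<or> M i j = S3)"

definition self_conjugate :: "nat \<Rightarrow> (nat \<Rightarrow> nat \<Rightarrow> S) \<Rightarrow> bool" where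
  "self_conjugate m A \<longleftrightarrow> (\<forall>i\<in>{1..m}. \<forall>j\<in>{1..m}. A j i = sconj (A i j))"

definition JM :: "nat \<Rightarrow> (nat \<Rightarrow> nat \<Rightarrow> S) \<Rightarrow> nat set \<Rightarrow> nat set" where
  "JM n M U = {j\<in>{1..n}. (\<Sum>i\<in>U. M i j) = S1}"

end

theory Submission
  imports Defs
begin

text \<open>
  Off-diagonal entries lie in the coset {2,3} of the subgroup {0,1}, so a sum of three of
  them is never 1; hence for distinguished M a column in J_M({1,i,j}) is one of 1, i, j.
  Column 1 is excluded because its sum is 1 + 3 + 2 = 0, the entry 3 = conj 2 being forced
  by self-conjugacy of A and the first row. Columns i and j both give the sum 2 + 1 + M i j,
  which is 1 exactly when M i j = 2.
\<close>

lemma sum_three_distinct: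
  fixes f :: "'a \<Rightarrow> S"
  assumes "a \<noteq> b" "a \<noteq> c" "b \<noteq> c"
  shows "(\<Sum>x\<in>{a, b, c}. f x) = f a + f b + f c"
  using assms by (simp add: add.assoc)

lemma offdiagonal_sum_three_ne_S1:
  assumes "x \<in> {S2, S3}" "y \<in> {S2, S3}" "z \<in> {S2, S3}"
  shows "x + y + z \<noteq> S1"
  using assms by (auto simp: plus_S_def)

lemma distinguished_offdiagonal:
  assumes "distinguished n M" "a \<in> {1..n}" "b \<in> {1..n}" "a \<noteq> b"
  shows "M a b \<in> {S2, S3}"
  using assms unfolding distinguished_def by blast

lemma distinguished_JM_three_subset:
  assumes M: "distinguished n M"
    and abc: "a \<in> {1..n}" "b \<in> {1..n}" "c \<in> {1..n}"
    and distinct: "a \<noteq> b" "a \<noteq> c" "b \<noteq> c"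
  shows "JM n M {a, b, c} \<subseteq> {a, b, c}"
proof
  fix d assume d: "d \<in> JM n M {a, b, c}"
  show "d \<in> {a, b, c}"
  proof (rule ccontr)
    assume "d \<notin> {a, b, c}"
    moreover have "d \<in> {1..n}" using d by (simp add: JM_def)
    ultimately have "M a d + M b d + M c d \<noteq> S1"
      using distinguished_offdiagonal[OF M] abc
      by (intro offdiagonal_sum_three_ne_S1) auto
    with d show False by (simp add: JM_def sum_three_distinct[OF distinct])
  qed
qed

lemma distinguished_entry_eq_S2:
  assumes M: "distinguished n M"
    and abc: "a \<in> {1..n}" "b \<in> {1..n}" "c \<in> {1..n}"
    and distinct: "a \<noteq> b" "a \<noteq> c" "b \<noteq> c"
    and row_a: "M a b = S2" "M a c = S2"
    and column_a: "M b a = S3" "M c a = S2"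
    and symmetric: "M c b = M b c"
    and J: "JM n M {a, b, c} \<noteq> {}"
  shows "M b c = S2"
proof -
  obtain d where d: "d \<in> JM n M {a, b, c}" using J by blast
  have diag: "M a a = S1" "M b b = S1" "M c c = S1"
    using M abc unfolding distinguished_def by blast+
  have "d \<in> {a, b, c}" using d distinguished_JM_three_subset[OF M abc distinct] by blast
  moreover have sum: "M a d + M b d + M c d = S1"
    using d sum_three_distinct[OF distinct, of "\<lambda>x. M x d"] unfolding JM_def by simp
  moreover have "d \<noteq> a"
  proof
    assume "d = a"
    with sum have "S1 + S3 + S2 = S1" using diag column_a by simp
    thus False by (simp add: plus_S_def)
  qed
  ultimately have "S2 + S1 + M b c = S1"
    using row_a symmetric diag by (auto simp: ac_simps)
  moreover have "M b c \<in> {S2, S3}" using distinguished_offdiagonal[OF M abc(2,3) distinct(3)] .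
  ultimately show ?thesis by (auto simp: plus_S_def)
qed

theorem mainTheorem12:
  fixes n k :: nat and M :: "nat \<Rightarrow> nat \<Rightarrow> S"
  assumes dist: "distinguished n M"
    and kpos: "0 < k" and kn: "k \<le> n"
    and block: "\<forall>i\<in>{1..k}. \<forall>j\<in>{k+1..n}. M j i = M i j"
    and selfconjA: "self_conjugate k M"
    and row1: "M 1 1 = S1" "\<forall>j\<in>{2..n}. M 1 j = S2"
    and J: "\<forall>i\<in>{1..k}. \<forall>j\<in>{k+1..n}. JM n M {1, i, j} \<noteq> {}"
  shows "\<forall>i\<in>{1..k}. \<forall>j\<in>{k+1..n}. M i j = S2"
proof (intro ballI)
  fix i j assume i: "i \<in> {1..k}" and j: "j \<in> {k+1..n}"
  show "M i j = S2"
  proof (cases "i = 1")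
    case True
    with row1 j kpos show ?thesis by auto
  next
    case False
    have distinct: "1 \<noteq> i" "1 \<noteq> j" "i \<noteq> j" using i j False by auto
    have range: "1 \<in> {1..n}" "i \<in> {1..n}" "j \<in> {1..n}" using i j kn by auto
    have M1i: "M 1 i = S2" and M1j: "M 1 j = S2" using row1 i j kn False by auto
    have "1 \<in> {1..k}" using kpos by simp
    with selfconjA i have "M i 1 = sconj (M 1 i)" unfolding self_conjugate_def by blast
    hence "M i 1 = S3" using M1i by simp
    moreover have "M j 1 = S2" using block j kpos M1j by force
    moreover have "M j i = M i j" using block i j by blast
    ultimately show ?thesis
      using distinguished_entry_eq_S2[OF dist range distinct M1i M1j] J i j by blast
  qed
qed

end
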